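(* In the setting described in the context, write $c=\hat u_1\cdot\hat e_1$ and $s=\hat u_3\cdot\hat e_1$, and consider the conditions (EC1) $\lambda_1\sqrt{\lambda_3^2-1}\,s=-\lambda_3\sqrt{1-\lambda_1^2}\,c$; (EC2) $\lambda_1\sqrt{\lambda_3^2-1}\,c=-\lambda_3\sqrt{1-\lambda_1^2}\,s$; (EC3) $\sqrt{1-\lambda_1^2}\,s=-\sqrt{\lambda_3^2-1}\,c$; (EC4) $\sqrt{1-\lambda_1^2}\,c=-\sqrt{\lambda_3^2-1}\,s$. Then: if the red triple is a triple cluster of the first kind, (EC1) holds; if the green triple is a triple cluster of the first kind, (EC2) holds; if the red triple is a triple cluster of the second kind, (EC3) holds; if the green triple is a triple cluster of the second kind, (EC4) holds. In particular, if a triple cluster (red or green, of either kind) exists, at least one of (EC1)–(EC4) holds.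
   Context: Setting: Let $U$ be a real symmetric positive-definite $3\times3$ matrix with eigenvalues $0<\lambda_1<\lambda_2=1<\lambda_3$ and orthonormal eigenvectors $\hat u_1,\hat u_2,\hat u_3$. Let $\hat e_1,\hat e_2$ be orthonormal vectors orthogonal to $\hat u_2$, oriented so that $\hat u_1\cdot\hat e_1=\hat u_3\cdot\hat e_2$ and $\hat u_3\cdot\hat e_1=-\hat u_1\cdot\hat e_2$, and such that $V:=(-I+2\hat e_1\otimes\hat e_1)U(-I+2\hat e_1\otimes\hat e_1)=(-I+2\hat e_2\otimes\hat e_2)U(-I+2\hat e_2\otimes\hat e_2)$ satisfies $V\neq U$ ($U,V$ form compound domains with symmetry axes $\hat e_1,\hat e_2$). Austenite connections: for $\kappa=\pm1$ let $R_\kappa\in SO(3)$, $b_\kappa$, $\hat m_\kappa$ be the two solutions of $R_\kappa U-I=b_\kappa\otimes\hat m_\kappa$, given by $b_\kappa=\frac{\rho}{\sqrt{\lambda_3^2-\lambda_1^2}}(\lambda_3\sqrt{1-\lambda_1^2}\,\hat u_1+\kappa\lambda_1\sqrt{\lambda_3^2-1}\,\hat u_3)$, $\hat m_\kappa=\frac{\lambda_3-\lambda_1}{\rho\sqrt{\lambda_3^2-\lambda_1^2}}(-\sqrt{1-\lambda_1^2}\,\hat u_1+\kappa\sqrt{\lambda_3^2-1}\,\hat u_3)$ with $\rho\neq0$ normalizing $\hat m_\kappa$. Equivalently $U-R_\kappa^T=(R_\kappa^Tb_\kappa)\otimes\hat m_\kappa$. Twin connections (known): there are $Q^{(1)},Q^{(2)}\in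 SO(3)$ and nonzero scalars $\zeta,\eta$ with $Q^{(1)}V-U=\zeta\,U\hat e_2\otimes\hat e_1$ and $Q^{(2)}V-U=\eta\,U\hat e_1\otimes\hat e_2$. Triple clusters: the red triple is $(U,Q^{(1)}V,R_{+}^T)$ and the green triple is $(U,Q^{(2)}V,R_{-}^T)$. The red triple is a triple cluster of the first kind if $R_+^Tb_+\parallel U\hat e_2$ (all pairwise differences are then rank-one with parallel shear vectors), and of the second kind if $\hat m_+\parallel\hat e_1$ (all pairwise differences are then rank-one with a common normal). The green triple is of the first kind if $R_-^Tb_-\parallel U\hat e_1$, and of the second kind if $\hat m_-\parallel\hat e_2$. *)

theory Defs
  imports "HOL-Analysis.Analysis"
begin

definition outer :: "real^3 \<Rightarrow> real^3 \<Rightarrow> real^3^3" where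
  "outer a b = (\<chi> i j. a $ i * b $ j)"

definition SO3 :: "real^3^3 \<Rightarrow> bool" where
  "SO3 R \<longleftrightarrow> orthogonal_matrix R \<and> det R = 1"

definition parallel :: "real^3 \<Rightarrow> real^3 \<Rightarrow> bool" where
  "parallel x y \<longleftrightarrow> (\<exists>t. x = t *\<^sub>R y) \<or> (\<exists>t. y = t *\<^sub>R x)"

definition bvec :: "real \<Rightarrow> real \<Rightarrow> real \<Rightarrow> real \<Rightarrow> real^3 \<Rightarrow> real^3 \<Rightarrow> real^3" where
  "bvec l1 l3 \<rho> \<kappa> u1 u3 =
     (\<rho> / sqrt (l3\<^sup>2 - l1\<^sup>2)) *\<^sub>R
       ((l3 * sqrt (1 - l1\<^sup>2)) *\<^sub>R u1 + (\<kappa> * l1 * sqrt (l3\<^sup>2 - 1)) *\<^sub>R u3)"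

definition mvec :: "real \<Rightarrow> real \<Rightarrow> real \<Rightarrow> real \<Rightarrow> real^3 \<Rightarrow> real^3 \<Rightarrow> real^3" where
  "mvec l1 l3 \<rho> \<kappa> u1 u3 =
     ((l3 - l1) / (\<rho> * sqrt (l3\<^sup>2 - l1\<^sup>2))) *\<^sub>R
       ((- sqrt (1 - l1\<^sup>2)) *\<^sub>R u1 + (\<kappa> * sqrt (l3\<^sup>2 - 1)) *\<^sub>R u3)"

end

theory Submission
  imports Defs
begin

text \<open>Only the components along the eigenvectors \<open>u1\<close>, \<open>u3\<close> matter. Applying \<open>R U = I + b \<otimes> m\<close> to \<open>u\<^sub>i\<close> and
pairing with \<open>b\<close> gives \<open>l\<^sub>i (R\<^sup>T b \<bullet> u\<^sub>i) = b \<bullet> u\<^sub>i + \<bar>b\<bar>\<^sup>2 (m \<bullet> u\<^sub>i)\<close>, so \<open>R\<^sup>T b\<close> is proportional to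
\<open>(sqrt (1 - l1\<^sup>2), \<kappa> sqrt (l3\<^sup>2 - 1))\<close>, while \<open>U e\<close> has components \<open>(l1 (e \<bullet> u1), l3 (e \<bullet> u3))\<close>.
Parallel vectors have proportional components, and the vanishing 2\<times>2 determinant is the
respective condition EC1--EC4.\<close>

lemma outer_mult_vec: "outer a b *v x = (b \<bullet> x) *\<^sub>R a"
  unfolding outer_def
  by (simp add: vec_eq_iff matrix_vector_mult_def inner_vec_def sum_distrib_left ac_simps)

lemma parallel_imp_inner_cross_eq:
  "parallel x y \<Longrightarrow> (x \<bullet> p) * (y \<bullet> q) = (x \<bullet> q) * (y \<bullet> p)"
  unfolding parallel_def by auto

lemma rank_one_connection_pullback_inner:
  assumes "R ** U - mat 1 = outer b m" and "U *v u = l *\<^sub>R u"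
  shows "l * ((transpose R *v b) \<bullet> u) = b \<bullet> u + (m \<bullet> u) * (b \<bullet> b)"
proof -
  have "R ** U = mat 1 + outer b m"
    using assms(1) by (simp add: algebra_simps)
  then have "R *v (U *v u) = u + (m \<bullet> u) *\<^sub>R b"
    by (simp add: matrix_vector_mul_assoc matrix_vector_mult_add_rdistrib outer_mult_vec)
  moreover have "(transpose R *v b) \<bullet> (U *v u) = b \<bullet> (R *v (U *v u))"
    by (simp add: dot_lmul_matrix)
  ultimately show ?thesis
    using assms(2) by (simp add: inner_add_right)
qed

lemma symmetric_matrix_inner_eigvec:
  fixes U :: "real^'n^'n"
  assumes "transpose U = U" and "U *v u = l *\<^sub>R u"
  shows "(U *v x) \<bullet> u = l * (x \<bullet> u)"
proof -
  have "(U *v x) \<bullet> u = (x v* U) \<bullet> u"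
    by (metis assms(1) vector_transpose_matrix)
  then show ?thesis
    by (simp add: dot_lmul_matrix assms(2))
qed

context
  fixes u1 u3 :: "real^3"
  assumes u1_unit: "norm u1 = 1" and u3_unit: "norm u3 = 1" and u13: "u1 \<bullet> u3 = 0"
begin

lemma bvec_inner_eigvecs:
  "bvec l1 l3 \<rho> \<kappa> u1 u3 \<bullet> u1 = \<rho> / sqrt (l3\<^sup>2 - l1\<^sup>2) * (l3 * sqrt (1 - l1\<^sup>2))"
  "bvec l1 l3 \<rho> \<kappa> u1 u3 \<bullet> u3 = \<rho> / sqrt (l3\<^sup>2 - l1\<^sup>2) * (\<kappa> * l1 * sqrt (l3\<^sup>2 - 1))"
  using u1_unit u3_unit u13
  by (simp_all add: bvec_def inner_add_left norm_eq_1 inner_commute[of u3 u1])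

lemma mvec_inner_eigvecs:
  "mvec l1 l3 \<rho> \<kappa> u1 u3 \<bullet> u1 = (l3 - l1) / (\<rho> * sqrt (l3\<^sup>2 - l1\<^sup>2)) * (- sqrt (1 - l1\<^sup>2))"
  "mvec l1 l3 \<rho> \<kappa> u1 u3 \<bullet> u3 = (l3 - l1) / (\<rho> * sqrt (l3\<^sup>2 - l1\<^sup>2)) * (\<kappa> * sqrt (l3\<^sup>2 - 1))"
  using u1_unit u3_unit u13
  by (simp_all add: mvec_def inner_add_left inner_diff_left norm_eq_1 inner_commute[of u3 u1])

lemma bvec_inner_self:
  assumes "l1\<^sup>2 \<le> 1" "1 \<le> l3\<^sup>2" "l1\<^sup>2 < l3\<^sup>2" "\<kappa>\<^sup>2 = 1"
  shows "bvec l1 l3 \<rho> \<kappa> u1 u3 \<bullet> bvec l1 l3 \<rho> \<kappa> u1 u3 = \<rho>\<^sup>2"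
proof -
  have "bvec l1 l3 \<rho> \<kappa> u1 u3 \<bullet> bvec l1 l3 \<rho> \<kappa> u1 u3 =
      (\<rho> / sqrt (l3\<^sup>2 - l1\<^sup>2))\<^sup>2 * ((l3 * sqrt (1 - l1\<^sup>2))\<^sup>2 + (\<kappa> * l1 * sqrt (l3\<^sup>2 - 1))\<^sup>2)"
    using u1_unit u3_unit u13
    by (simp add: bvec_def inner_add_left inner_add_right norm_eq_1 inner_commute[of u3 u1]
        power2_eq_square algebra_simps)
  also have "\<dots> = (\<rho> / sqrt (l3\<^sup>2 - l1\<^sup>2))\<^sup>2 * (sqrt (l3\<^sup>2 - l1\<^sup>2))\<^sup>2"
    using assms by (simp add: power_mult_distrib algebra_simps)
  also have "\<dots> = \<rho>\<^sup>2"
    using assms(3) by (simp add: power_divide)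
  finally show ?thesis .
qed

lemma austenite_shear_pullback_components:
  assumes l: "0 < l1" "l1 < 1" "1 < l3" and \<kappa>: "\<kappa>\<^sup>2 = 1" and \<rho>: "\<rho> \<noteq> 0"
    and eig1: "U *v u1 = l1 *\<^sub>R u1" and eig3: "U *v u3 = l3 *\<^sub>R u3"
    and R: "R ** U - mat 1 = outer (bvec l1 l3 \<rho> \<kappa> u1 u3) (mvec l1 l3 \<rho> \<kappa> u1 u3)"
  shows "(transpose R *v bvec l1 l3 \<rho> \<kappa> u1 u3) \<bullet> u1 = \<rho> * sqrt (1 - l1\<^sup>2) / sqrt (l3\<^sup>2 - l1\<^sup>2)"
    and "(transpose R *v bvec l1 l3 \<rho> \<kappa> u1 u3) \<bullet> u3 =
      \<kappa> * \<rho> * sqrt (l3\<^sup>2 - 1) / sqrt (l3\<^sup>2 - l1\<^sup>2)"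
proof -
  have l13: "l1\<^sup>2 < l3\<^sup>2"
    using l by (simp add: power_strict_mono)
  then have D: "sqrt (l3\<^sup>2 - l1\<^sup>2) \<noteq> 0"
    by simp
  have "bvec l1 l3 \<rho> \<kappa> u1 u3 \<bullet> bvec l1 l3 \<rho> \<kappa> u1 u3 = \<rho>\<^sup>2"
    using l l13 \<kappa> by (intro bvec_inner_self) (auto simp: abs_square_le_1 power_le_one)
  note components = this bvec_inner_eigvecs mvec_inner_eigvecs
  have "l1 * ((transpose R *v bvec l1 l3 \<rho> \<kappa> u1 u3) \<bullet> u1) =
      l1 * (\<rho> * sqrt (1 - l1\<^sup>2) / sqrt (l3\<^sup>2 - l1\<^sup>2))"
    using rank_one_connection_pullback_inner[OF R eig1] components \<rho> D by (simp add: field_simps power2_eq_square)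
  then show "(transpose R *v bvec l1 l3 \<rho> \<kappa> u1 u3) \<bullet> u1 = \<rho> * sqrt (1 - l1\<^sup>2) / sqrt (l3\<^sup>2 - l1\<^sup>2)"
    using l by (subst (asm) mult_left_cancel) auto
  have "l3 * ((transpose R *v bvec l1 l3 \<rho> \<kappa> u1 u3) \<bullet> u3) =
      l3 * (\<kappa> * \<rho> * sqrt (l3\<^sup>2 - 1) / sqrt (l3\<^sup>2 - l1\<^sup>2))"
    using rank_one_connection_pullback_inner[OF R eig3] components \<rho> D by (simp add: field_simps power2_eq_square)
  then show "(transpose R *v bvec l1 l3 \<rho> \<kappa> u1 u3) \<bullet> u3 =
      \<kappa> * \<rho> * sqrt (l3\<^sup>2 - 1) / sqrt (l3\<^sup>2 - l1\<^sup>2)"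
    using l by (subst (asm) mult_left_cancel) auto
qed

lemma first_kind_condition:
  assumes l: "0 < l1" "l1 < 1" "1 < l3" and \<kappa>: "\<kappa>\<^sup>2 = 1" and \<rho>: "\<rho> \<noteq> 0"
    and U: "transpose U = U" and eig1: "U *v u1 = l1 *\<^sub>R u1" and eig3: "U *v u3 = l3 *\<^sub>R u3"
    and R: "R ** U - mat 1 = outer (bvec l1 l3 \<rho> \<kappa> u1 u3) (mvec l1 l3 \<rho> \<kappa> u1 u3)"
    and par: "parallel (transpose R *v bvec l1 l3 \<rho> \<kappa> u1 u3) (U *v e)"
  shows "sqrt (1 - l1\<^sup>2) * l3 * (e \<bullet> u3) = \<kappa> * l1 * sqrt (l3\<^sup>2 - 1) * (e \<bullet> u1)"
proof -
  have "sqrt (l3\<^sup>2 - l1\<^sup>2) \<noteq> 0"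
    using l by (simp add: power_strict_mono)
  moreover have "\<rho> / sqrt (l3\<^sup>2 - l1\<^sup>2) * (sqrt (1 - l1\<^sup>2) * l3 * (e \<bullet> u3)) =
      \<rho> / sqrt (l3\<^sup>2 - l1\<^sup>2) * (\<kappa> * l1 * sqrt (l3\<^sup>2 - 1) * (e \<bullet> u1))"
    using parallel_imp_inner_cross_eq[OF par, of u1 u3]
      austenite_shear_pullback_components[OF l \<kappa> \<rho> eig1 eig3 R]
      symmetric_matrix_inner_eigvec[OF U eig1] symmetric_matrix_inner_eigvec[OF U eig3]
    by (simp add: ac_simps)
  ultimately show ?thesis
    using \<rho> by simp
qed

lemma second_kind_condition:
  assumes "0 < l1" "l1 < l3" "\<rho> \<noteq> 0" and par: "parallel (mvec l1 l3 \<rho> \<kappa> u1 u3) e"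
  shows "sqrt (1 - l1\<^sup>2) * (e \<bullet> u3) = - (\<kappa> * sqrt (l3\<^sup>2 - 1) * (e \<bullet> u1))"
proof -
  have "(l3 - l1) / (\<rho> * sqrt (l3\<^sup>2 - l1\<^sup>2)) \<noteq> 0"
    using assms by (simp add: power_strict_mono)
  moreover have "(l3 - l1) / (\<rho> * sqrt (l3\<^sup>2 - l1\<^sup>2)) * (sqrt (1 - l1\<^sup>2) * (e \<bullet> u3)) =
      (l3 - l1) / (\<rho> * sqrt (l3\<^sup>2 - l1\<^sup>2)) * (- (\<kappa> * sqrt (l3\<^sup>2 - 1) * (e \<bullet> u1)))"
    using parallel_imp_inner_cross_eq[OF par, of u1 u3] mvec_inner_eigvecs
    by (simp add: ac_simps)
  ultimately show ?thesis
    using mult_left_cancel by blast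
qed

end

theorem mainTheorem6:
  fixes U V Rp Rm Q1 Q2 :: "real^3^3"
    and u1 u2 u3 e1 e2 :: "real^3"
    and l1 l3 \<rho> \<zeta> \<eta> :: real
  assumes U_sym: "transpose U = U"
    and U_pd: "\<forall>x. x \<noteq> 0 \<longrightarrow> x \<bullet> (U *v x) > 0"
    and eigs: "0 < l1" "l1 < 1" "1 < l3"
    and eig1: "U *v u1 = l1 *\<^sub>R u1" and eig2: "U *v u2 = u2" and eig3: "U *v u3 = l3 *\<^sub>R u3"
    and on_u: "norm u1 = 1" "norm u2 = 1" "norm u3 = 1"
              "u1 \<bullet> u2 = 0" "u1 \<bullet> u3 = 0" "u2 \<bullet> u3 = 0"
    and on_e: "norm e1 = 1" "norm e2 = 1" "e1 \<bullet> e2 = 0" "e1 \<bullet> u2 = 0" "e2 \<bullet> u2 = 0"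
    and orient: "u1 \<bullet> e1 = u3 \<bullet> e2" "u3 \<bullet> e1 = - (u1 \<bullet> e2)"
    and V1: "V = (- mat 1 + 2 *\<^sub>R outer e1 e1) ** U ** (- mat 1 + 2 *\<^sub>R outer e1 e1)"
    and V2: "V = (- mat 1 + 2 *\<^sub>R outer e2 e2) ** U ** (- mat 1 + 2 *\<^sub>R outer e2 e2)"
    and VU: "V \<noteq> U"
    and rho: "\<rho> \<noteq> 0" "norm (mvec l1 l3 \<rho> 1 u1 u3) = 1"
    and Rp: "SO3 Rp" "Rp ** U - mat 1 = outer (bvec l1 l3 \<rho> 1 u1 u3) (mvec l1 l3 \<rho> 1 u1 u3)"
    and Rm: "SO3 Rm" "Rm ** U - mat 1 = outer (bvec l1 l3 \<rho> (-1) u1 u3) (mvec l1 l3 \<rho> (-1) u1 u3)"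
    and Q1: "SO3 Q1" "\<zeta> \<noteq> 0" "Q1 ** V - U = \<zeta> *\<^sub>R outer (U *v e2) e1"
    and Q2: "SO3 Q2" "\<eta> \<noteq> 0" "Q2 ** V - U = \<eta> *\<^sub>R outer (U *v e1) e2"
  defines "c \<equiv> u1 \<bullet> e1" and "s \<equiv> u3 \<bullet> e1"
  defines "EC1 \<equiv> l1 * sqrt (l3\<^sup>2 - 1) * s = - (l3 * sqrt (1 - l1\<^sup>2) * c)"
    and "EC2 \<equiv> l1 * sqrt (l3\<^sup>2 - 1) * c = - (l3 * sqrt (1 - l1\<^sup>2) * s)"
    and "EC3 \<equiv> sqrt (1 - l1\<^sup>2) * s = - (sqrt (l3\<^sup>2 - 1) * c)"
    and "EC4 \<equiv> sqrt (1 - l1\<^sup>2) * c = - (sqrt (l3\<^sup>2 - 1) * s)"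
  defines "red1 \<equiv> parallel (transpose Rp *v bvec l1 l3 \<rho> 1 u1 u3) (U *v e2)"
    and "green1 \<equiv> parallel (transpose Rm *v bvec l1 l3 \<rho> (-1) u1 u3) (U *v e1)"
    and "red2 \<equiv> parallel (mvec l1 l3 \<rho> 1 u1 u3) e1"
    and "green2 \<equiv> parallel (mvec l1 l3 \<rho> (-1) u1 u3) e2"
  shows "(red1 \<longrightarrow> EC1) \<and> (green1 \<longrightarrow> EC2) \<and> (red2 \<longrightarrow> EC3) \<and> (green2 \<longrightarrow> EC4)
         \<and> (red1 \<or> green1 \<or> red2 \<or> green2 \<longrightarrow> EC1 \<or> EC2 \<or> EC3 \<or> EC4)"
proof -
  note frame = on_u(1) on_u(3) on_u(5)
  have l13: "l1 < l3"
    using eigs by simp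
  have e_coords: "e1 \<bullet> u1 = c" "e1 \<bullet> u3 = s" "e2 \<bullet> u1 = - s" "e2 \<bullet> u3 = c"
    using orient unfolding c_def s_def by (simp_all add: inner_commute)
  have "red1 \<longrightarrow> EC1"
    using first_kind_condition[OF frame eigs _ rho(1) U_sym eig1 eig3 Rp(2), of e2] e_coords
    unfolding red1_def EC1_def by (simp add: ac_simps)
  moreover have "green1 \<longrightarrow> EC2"
    using first_kind_condition[OF frame eigs _ rho(1) U_sym eig1 eig3 Rm(2), of e1] e_coords
    unfolding green1_def EC2_def by (simp add: ac_simps)
  moreover have "red2 \<longrightarrow> EC3"
    using second_kind_condition[OF frame eigs(1) l13 rho(1), of 1 e1] e_coords
    unfolding red2_def EC3_def by (simp add: ac_simps)
  moreover have "green2 \<longrightarrow> EC4"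
    using second_kind_condition[OF frame eigs(1) l13 rho(1), of "-1" e2] e_coords
    unfolding green2_def EC4_def by (simp add: ac_simps)
  ultimately show ?thesis
    by blast
qed

end
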